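(* For every positive integer $n$ there exists an acyclic unique sink orientation $\psi$ of the $n$-dimensional cube which is not $i$-nice for any $i < n-2$.
   Context: Let $Q^n = 2^{[n]}$ be the vertex set of the $n$-cube, with $u,v$ adjacent iff $|u\oplus v|=1$; faces are $F_{J,v}=\{u : v\oplus u\subseteq J\}$ for $J\subseteq[n]$. A unique sink orientation (USO) is an orientation of the cube's edges such that every nonempty face has a unique sink (vertex with no outgoing edges within the face); it is acyclic (an AUSO) if it has no directed cycle. The outmap $s_\psi(v)$ is the set of coordinates $j$ such that the edge $\{v,v\oplus\{j\}\}$ is directed away from $v$; the global sink is the vertex $t$ with $s_\psi(t)=\emptyset$. Let $d(v,u)$ be the length of a shortest directed path from $v$ to $u$ ($\infty$ if none). The reachmap is $r_\psi(v)=s_\psi(v)\cup\{j : \exists u \text{ reachable from } v \text{ by a directed path with } j\in s_\psi(u)\}$. A vertex $v$ is $i$-covered by $u$ if $d(v,u)\le i$ and $r_\psi(u)\subsetneq r_\psi(v)$; $\psi$ is $i$-nice if every vertex other than the global sink is $i$-covered by some vertex. *)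

theory Defs
  imports Main
begin

text \<open>Vertices of the n-cube are subsets of [n] = {1..n}. An orientation is encoded
by its outmap s :: nat set \<Rightarrow> nat set (only values on vertices matter).\<close>

definition symdiff :: "nat set \<Rightarrow> nat set \<Rightarrow> nat set" where
  "symdiff A B = (A - B) \<union> (B - A)"

definition is_vertex :: "nat \<Rightarrow> nat set \<Rightarrow> bool" where
  "is_vertex n v \<longleftrightarrow> v \<subseteq> {1..n}"

definition is_orientation :: "nat \<Rightarrow> (nat set \<Rightarrow> nat set) \<Rightarrow> bool" where
  "is_orientation n s \<longleftrightarrow>
     (\<forall>v. is_vertex n v \<longrightarrow> s v \<subseteq> {1..n} \<and>
        (\<forall>j\<in>{1..n}. j \<in> s v \<longleftrightarrow> j \<notin> s (symdiff v {j})))"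

definition dedge :: "nat \<Rightarrow> (nat set \<Rightarrow> nat set) \<Rightarrow> nat set \<Rightarrow> nat set \<Rightarrow> bool" where
  "dedge n s u w \<longleftrightarrow> is_vertex n u \<and> (\<exists>j\<in>{1..n}. j \<in> s u \<and> w = symdiff u {j})"

definition adjacent :: "nat \<Rightarrow> nat set \<Rightarrow> nat set \<Rightarrow> bool" where
  "adjacent n u w \<longleftrightarrow> is_vertex n u \<and> is_vertex n w \<and> card (symdiff u w) = 1"

definition face :: "nat \<Rightarrow> nat set \<Rightarrow> nat set \<Rightarrow> nat set set" where
  "face n J v = {u. is_vertex n u \<and> symdiff v u \<subseteq> J}"

definition is_sink_of :: "nat \<Rightarrow> (nat set \<Rightarrow> nat set) \<Rightarrow> nat set set \<Rightarrow> nat set \<Rightarrow> bool" where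
  "is_sink_of n s F u \<longleftrightarrow> u \<in> F \<and>
     (\<forall>w\<in>F. adjacent n u w \<longrightarrow> \<not> dedge n s u w)"

definition is_USO :: "nat \<Rightarrow> (nat set \<Rightarrow> nat set) \<Rightarrow> bool" where
  "is_USO n s \<longleftrightarrow> is_orientation n s \<and>
     (\<forall>J v. J \<subseteq> {1..n} \<and> is_vertex n v \<longrightarrow> (\<exists>!u. is_sink_of n s (face n J v) u))"

definition is_AUSO :: "nat \<Rightarrow> (nat set \<Rightarrow> nat set) \<Rightarrow> bool" where
  "is_AUSO n s \<longleftrightarrow> is_USO n s \<and> (\<forall>v. \<not> (dedge n s)\<^sup>+\<^sup>+ v v)"

definition global_sink :: "nat \<Rightarrow> (nat set \<Rightarrow> nat set) \<Rightarrow> nat set \<Rightarrow> bool" where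
  "global_sink n s t \<longleftrightarrow> is_vertex n t \<and> s t = {}"

definition dist_le :: "nat \<Rightarrow> (nat set \<Rightarrow> nat set) \<Rightarrow> nat set \<Rightarrow> nat set \<Rightarrow> nat \<Rightarrow> bool" where
  "dist_le n s v u i \<longleftrightarrow> (\<exists>k\<le>i. (dedge n s ^^ k) v u)"

definition reachmap :: "nat \<Rightarrow> (nat set \<Rightarrow> nat set) \<Rightarrow> nat set \<Rightarrow> nat set" where
  "reachmap n s v = s v \<union> {j. \<exists>u. (dedge n s)\<^sup>*\<^sup>* v u \<and> j \<in> s u}"

definition i_covered_by :: "nat \<Rightarrow> (nat set \<Rightarrow> nat set) \<Rightarrow> nat \<Rightarrow> nat set \<Rightarrow> nat set \<Rightarrow> bool" where
  "i_covered_by n s i v u \<longleftrightarrow> is_vertex n u \<and> dist_le n s v u i \<and> reachmap n s u \<subset> reachmap n s v"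

definition i_nice :: "nat \<Rightarrow> (nat set \<Rightarrow> nat set) \<Rightarrow> nat \<Rightarrow> bool" where
  "i_nice n s i \<longleftrightarrow>
     (\<forall>v. is_vertex n v \<and> \<not> global_sink n s v \<longrightarrow> (\<exists>u. i_covered_by n s i v u))"

end

theory Submission
  imports Defs
begin

text \<open>Start from the orientation in which every edge points to the smaller set and reverse a
  matching: the upward steps {k} \<rightarrow> {k,k+1} of the ladder {1} \<rightarrow> {1,2} \<rightarrow> {2} \<rightarrow> \<dots> \<rightarrow> {n},
  and the edges in direction 1 from 3-sets to 4-sets. Reversing a matching of this orientation
  always gives a USO (Szab\'o--Welzl criterion), and an explicit potential shows acyclicity.
  From a vertex with at least three elements one reaches {1} by descending (crossing one
  reversed direction-1 edge if the vertex avoids 1) and then climbs the ladder, leaving through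
  every coordinate on the way; so its reachmap is all of [n]. Every vertex within distance
  i < n - 2 of [n] has at least three elements, hence cannot cover [n].\<close>

lemma symdiff_symdiff: "symdiff v (symdiff v u) = u"
  by (auto simp: symdiff_def)

lemma is_vertex_finite: "is_vertex n u \<Longrightarrow> finite u"
  by (auto simp: is_vertex_def intro: finite_subset)

lemma is_vertex_symdiff:
  "is_vertex n u \<Longrightarrow> j \<in> {1..n} \<Longrightarrow> is_vertex n (symdiff u {j})"
  by (auto simp: is_vertex_def symdiff_def)

lemma face_eq_image:
  assumes "J \<subseteq> {1..n}" "is_vertex n v"
  shows "face n J v = symdiff v ` Pow J"
proof
  show "symdiff v ` Pow J \<subseteq> face n J v"
    using assms by (auto simp: face_def symdiff_def is_vertex_def)
  show "face n J v \<subseteq> symdiff v ` Pow J"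
  proof
    fix u assume "u \<in> face n J v"
    then have "symdiff v u \<in> Pow J" by (auto simp: face_def)
    then show "u \<in> symdiff v ` Pow J" by (metis image_eqI symdiff_symdiff)
  qed
qed

lemma card_face:
  assumes "J \<subseteq> {1..n}" "is_vertex n v"
  shows "card (face n J v) = card (Pow J)"
proof -
  have "inj_on (symdiff v) (Pow J)"
    by (rule inj_onI) (metis symdiff_symdiff)
  then show ?thesis
    using face_eq_image[OF assms] by (simp add: card_image)
qed

lemma is_sink_of_face_iff:
  assumes J: "J \<subseteq> {1..n}" and u: "u \<in> face n J v"
  shows "is_sink_of n s (face n J v) u \<longleftrightarrow> s u \<inter> J = {}"
proof
  assume sink: "is_sink_of n s (face n J v) u"
  show "s u \<inter> J = {}"
  proof (rule ccontr)
    assume "s u \<inter> J \<noteq> {}"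
    then obtain j where j: "j \<in> s u" "j \<in> J" by auto
    have uv: "is_vertex n u" using u by (simp add: face_def)
    have jn: "j \<in> {1..n}" using j J by auto
    let ?w = "symdiff u {j}"
    have "?w \<in> face n J v"
      using u j(2) is_vertex_symdiff[OF uv jn] by (auto simp: face_def symdiff_def)
    moreover have "adjacent n u ?w"
      using uv is_vertex_symdiff[OF uv jn] by (simp add: adjacent_def symdiff_symdiff)
    moreover have "dedge n s u ?w"
      using uv jn j(1) by (auto simp: dedge_def)
    ultimately show False using sink by (auto simp: is_sink_of_def)
  qed
next
  assume empty: "s u \<inter> J = {}"
  show "is_sink_of n s (face n J v) u"
    unfolding is_sink_of_def
  proof (intro conjI ballI impI notI u)
    fix w assume w: "w \<in> face n J v" and "dedge n s u w"
    then obtain j where j: "j \<in> s u" "w = symdiff u {j}" by (auto simp: dedge_def)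
    have "symdiff u w \<subseteq> J" using u w by (auto simp: face_def symdiff_def)
    then have "j \<in> J" using j(2) by (auto simp: symdiff_def)
    then show False using empty j(1) by blast
  qed
qed

text \<open>Within the face spanned by J the hypothesis makes u \<mapsto> s u \<inter> J injective, hence a
  bijection onto the subsets of J, and the sinks are the preimages of the empty set.\<close>
lemma Szabo_Welzl_is_USO:
  assumes orientation: "is_orientation n s"
    and distinguish: "\<And>u w. is_vertex n u \<Longrightarrow> is_vertex n w \<Longrightarrow> u \<noteq> w \<Longrightarrow>
      \<exists>j\<in>symdiff u w. (j \<in> s u) \<noteq> (j \<in> s w)"
  shows "is_USO n s"
  unfolding is_USO_def
proof (intro conjI allI impI orientation)
  fix J v assume "J \<subseteq> {1..n} \<and> is_vertex n v"
  then have J: "J \<subseteq> {1..n}" and v: "is_vertex n v" by auto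
  define F where "F = face n J v"
  have finJ: "finite J" using J finite_subset by blast
  have inj: "inj_on (\<lambda>u. s u \<inter> J) F"
  proof (rule inj_onI)
    fix u w assume u: "u \<in> F" and w: "w \<in> F" and eq: "s u \<inter> J = s w \<inter> J"
    show "u = w"
    proof (rule ccontr)
      assume "u \<noteq> w"
      moreover have "is_vertex n u" "is_vertex n w" using u w by (auto simp: F_def face_def)
      ultimately obtain j where "j \<in> symdiff u w" "(j \<in> s u) \<noteq> (j \<in> s w)"
        using distinguish by blast
      moreover have "symdiff u w \<subseteq> J" using u w by (auto simp: F_def face_def symdiff_def)
      ultimately show False using eq by blast
    qed
  qed
  have "(\<lambda>u. s u \<inter> J) ` F = Pow J"
  proof (rule card_subset_eq)
    show "card ((\<lambda>u. s u \<inter> J) ` F) = card (Pow J)"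
      using card_image[OF inj] card_face[OF J v] by (simp add: F_def)
  qed (use finJ in auto)
  then obtain t where t: "t \<in> F" "s t \<inter> J = {}"
    by (metis (no_types, lifting) Pow_bottom imageE)
  show "\<exists>!u. is_sink_of n s (face n J v) u"
  proof
    show "is_sink_of n s (face n J v) t"
      using t is_sink_of_face_iff[OF J] by (simp add: F_def)
    fix u assume "is_sink_of n s (face n J v) u"
    then have "u \<in> F" "s u \<inter> J = {}"
      using is_sink_of_face_iff[OF J] by (auto simp: F_def is_sink_of_def)
    then show "u = t" using t inj by (auto dest: inj_onD)
  qed
qed

lemma tranclp_potential_less:
  fixes f :: "'a \<Rightarrow> 'b::order"
  assumes "R\<^sup>+\<^sup>+ u w" and "\<And>u w. R u w \<Longrightarrow> f w < f u"
  shows "f w < f u"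
  using assms(1) by (induction rule: tranclp_induct) (use assms(2) less_trans in blast)+

lemma dedge_card_le: "dedge n s u w \<Longrightarrow> card u \<le> Suc (card w)"
proof -
  assume "dedge n s u w"
  then obtain j where u: "is_vertex n u" and w: "w = symdiff u {j}"
    by (auto simp: dedge_def)
  have "u \<subseteq> insert j w" using w by (auto simp: symdiff_def)
  moreover have fin: "finite w" using w is_vertex_finite[OF u] by (simp add: symdiff_def)
  ultimately have "card u \<le> card (insert j w)" by (simp add: card_mono)
  also have "\<dots> \<le> Suc (card w)" using fin by (simp add: card_insert_if)
  finally show ?thesis .
qed

lemma relpow_dedge_card_le: "(dedge n s ^^ k) v u \<Longrightarrow> card v \<le> card u + k"
proof (induction k arbitrary: u)
  case (Suc k)
  then obtain y where "(dedge n s ^^ k) v y" "dedge n s y u" by auto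
  with Suc.IH dedge_card_le[of n s y u] show ?case by fastforce
qed simp

text \<open>The orientation towards the empty set with the edges marked by F reversed; F u j refers
  to the edge {u, u \<oplus> {j}}.\<close>
definition flip_outmap :: "nat \<Rightarrow> (nat set \<Rightarrow> nat \<Rightarrow> bool) \<Rightarrow> nat set \<Rightarrow> nat set" where
  "flip_outmap n F u = {j \<in> {1..n}. (j \<in> u) \<noteq> F u j}"

lemma is_orientation_flip_outmap:
  assumes "\<And>u j. F (symdiff u {j}) j = F u j"
  shows "is_orientation n (flip_outmap n F)"
  unfolding is_orientation_def
proof (intro allI impI conjI ballI)
  fix v j assume "j \<in> {1..n}"
  moreover have "j \<in> symdiff v {j} \<longleftrightarrow> j \<notin> v" by (auto simp: symdiff_def)
  ultimately show "(j \<in> flip_outmap n F v) = (j \<notin> flip_outmap n F (symdiff v {j}))"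
    using assms[of v j] by (auto simp: flip_outmap_def)
qed (auto simp: flip_outmap_def)

text \<open>If F disagreed on every coordinate of u \<oplus> w, then u \<oplus> w would be a single edge
  (impossible, F being a property of edges) or a pair {a, b} with F u a and F w b, and then the
  vertex u \<oplus> {a} = w \<oplus> {b} would carry two marked edges.\<close>
lemma flip_matching_agrees_somewhere:
  assumes edge: "\<And>u j. F (symdiff u {j}) j = F u j"
    and matching: "\<And>u j k. F u j \<Longrightarrow> F u k \<Longrightarrow> j = k"
    and "u \<noteq> w"
  shows "\<exists>j\<in>symdiff u w. F u j = F w j"
proof (rule ccontr)
  assume "\<not> ?thesis"
  then have differ: "\<And>j. j \<in> symdiff u w \<Longrightarrow> F u j \<noteq> F w j" by blast
  from \<open>u \<noteq> w\<close> obtain j where j: "j \<in> symdiff u w" by (auto simp: symdiff_def)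
  show False
  proof (cases "symdiff u w = {j}")
    case True
    then have "w = symdiff u {j}" by (metis symdiff_symdiff)
    then show False using differ[OF j] edge[of u j] by simp
  next
    case False
    then obtain k where k: "k \<in> symdiff u w" "k \<noteq> j" using j by blast
    obtain a b where ab: "F u a" "F w b" "a \<noteq> b" "{a, b} = {j, k}"
    proof (cases "F u j")
      case True
      then have "F w k" using differ[OF k(1)] matching[of u j k] k(2) by blast
      then show thesis using that[of j k] True k(2) by blast
    next
      case False
      then have "F u k" "F w j"
        using differ[OF j] differ[OF k(1)] matching[of w j k] k(2) by blast+
      then show thesis using that[of k j] k(2) by (simp add: insert_commute)
    qed
    have "symdiff u w \<subseteq> {a, b}"
    proof
      fix l assume "l \<in> symdiff u w"
      then have "F u l \<or> F w l" using differ by blast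
      then show "l \<in> {a, b}" using matching[of u l a] matching[of w l b] ab by blast
    qed
    moreover have "{a, b} \<subseteq> symdiff u w" using ab(4) j k(1) by simp
    ultimately have "symdiff u w = {a, b}" by (rule subset_antisym)
    then have "symdiff u {a} = symdiff w {b}"
      using ab(3) by (auto simp: symdiff_def set_eq_iff)
    then have "F (symdiff u {a}) a" "F (symdiff u {a}) b"
      using ab(1,2) edge[of u a] edge[of w b] by simp_all
    then show False using matching ab(3) by blast
  qed
qed

lemma is_USO_flip_outmap:
  assumes edge: "\<And>u j. F (symdiff u {j}) j = F u j"
    and matching: "\<And>u j k. F u j \<Longrightarrow> F u k \<Longrightarrow> j = k"
  shows "is_USO n (flip_outmap n F)"
proof (rule Szabo_Welzl_is_USO)
  show "is_orientation n (flip_outmap n F)" using edge by (rule is_orientation_flip_outmap)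
  fix u w assume "is_vertex n u" "is_vertex n w" "u \<noteq> w"
  moreover have "\<exists>j\<in>symdiff u w. F u j = F w j"
    by (rule flip_matching_agrees_somewhere) (rule edge, erule (1) matching, fact)
  ultimately show "\<exists>j\<in>symdiff u w. (j \<in> flip_outmap n F u) \<noteq> (j \<in> flip_outmap n F w)"
    unfolding flip_outmap_def is_vertex_def symdiff_def by blast
qed

lemma reachmap_flip_outmap_subset: "reachmap n (flip_outmap n F) u \<subseteq> {1..n}"
  by (auto simp: reachmap_def flip_outmap_def)

definition ladder_flip :: "nat set \<Rightarrow> nat \<Rightarrow> bool" where
  "ladder_flip u j \<longleftrightarrow> (2 \<le> j \<and> u - {j} = {j - 1}) \<or> (j = 1 \<and> card (u - {j}) = 3)"

abbreviation ladder_outmap :: "nat \<Rightarrow> nat set \<Rightarrow> nat set" where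
  "ladder_outmap n \<equiv> flip_outmap n ladder_flip"

abbreviation ladder_edge :: "nat \<Rightarrow> nat set \<Rightarrow> nat set \<Rightarrow> bool" where
  "ladder_edge n \<equiv> dedge n (ladder_outmap n)"

lemma ladder_flip_symdiff: "ladder_flip (symdiff u {j}) j = ladder_flip u j"
proof -
  have "symdiff u {j} - {j} = u - {j}" by (auto simp: symdiff_def)
  then show ?thesis by (simp add: ladder_flip_def)
qed

lemma ladder_flip_ge2: "2 \<le> j \<Longrightarrow> ladder_flip u j \<longleftrightarrow> u - {j} = {j - 1}"
  by (simp add: ladder_flip_def)

lemma ladder_flip_1: "ladder_flip u 1 \<longleftrightarrow> card (u - {1}) = 3"
  by (simp add: ladder_flip_def)

lemma not_ladder_flip_0: "\<not> ladder_flip u 0"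
  by (simp add: ladder_flip_def)

lemma ladder_flip_card_le:
  assumes "ladder_flip u j" "2 \<le> j"
  shows "card u \<le> 2"
proof -
  have "u - {j} = {j - 1}" using assms by (simp add: ladder_flip_ge2)
  then have "u \<subseteq> {j - 1, j}" by blast
  then have "card u \<le> card {j - 1, j}" by (simp add: card_mono)
  also have "\<dots> \<le> 2" by (simp add: card_insert_if)
  finally show ?thesis .
qed

lemma ladder_flip_unique:
  assumes j: "ladder_flip u j" and k: "ladder_flip u k"
  shows "j = k"
proof (rule ccontr)
  assume "j \<noteq> k"
  moreover have "j \<noteq> 0" "k \<noteq> 0" using j k not_ladder_flip_0 by metis+
  ultimately consider "2 \<le> j" "2 \<le> k" | "j = 1" "2 \<le> k" | "k = 1" "2 \<le> j" by linarith
  then show False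
  proof cases
    case 1
    then have eqs: "u - {j} = {j - 1}" "u - {k} = {k - 1}" using j k by (simp_all add: ladder_flip_ge2)
    then have "j - 1 \<in> insert k (u - {k})" "k - 1 \<in> insert j (u - {j})" by blast+
    then have "j - 1 = k \<or> j - 1 = k - 1" "k - 1 = j \<or> k - 1 = j - 1" unfolding eqs by simp_all
    then show False using 1 \<open>j \<noteq> k\<close> by linarith
  next
    case 2
    then have "3 \<le> card u" using j ladder_flip_1[of u] card_Diff1_le[of u 1] by simp
    then show False using ladder_flip_card_le[OF k \<open>2 \<le> k\<close>] by simp
  next
    case 3
    then have "3 \<le> card u" using k ladder_flip_1[of u] card_Diff1_le[of u 1] by simp
    then show False using ladder_flip_card_le[OF j \<open>2 \<le> j\<close>] by simp
  qed
qed

lemma is_USO_ladder: "is_USO n (ladder_outmap n)"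
  by (rule is_USO_flip_outmap[where F = ladder_flip, OF ladder_flip_symdiff]) (rule ladder_flip_unique)

lemma ladder_edge_remove:
  assumes "is_vertex n u" "j \<in> u" "\<not> ladder_flip u j"
  shows "ladder_edge n u (u - {j})"
proof -
  have "j \<in> {1..n}" using assms by (auto simp: is_vertex_def)
  moreover have "u - {j} = symdiff u {j}" using assms by (auto simp: symdiff_def)
  ultimately show ?thesis using assms by (auto simp: dedge_def flip_outmap_def)
qed

lemma ladder_edge_insert:
  assumes "is_vertex n u" "j \<in> {1..n}" "j \<notin> u" "ladder_flip u j"
  shows "ladder_edge n u (insert j u)"
proof -
  have "insert j u = symdiff u {j}" using assms by (auto simp: symdiff_def)
  then show ?thesis using assms by (auto simp: dedge_def flip_outmap_def)
qed

lemma ladder_edgeE: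
  assumes "ladder_edge n u w"
  obtains j where "is_vertex n u" "j \<in> u" "\<not> ladder_flip u j" "w = u - {j}"
    | j where "is_vertex n u" "j \<in> {1..n}" "j \<notin> u" "ladder_flip u j" "w = insert j u"
proof -
  from assms obtain j where u: "is_vertex n u" and j: "j \<in> {1..n}" "(j \<in> u) \<noteq> ladder_flip u j"
    and w: "w = symdiff u {j}"
    unfolding dedge_def flip_outmap_def by blast
  show thesis
  proof (cases "j \<in> u")
    case True
    then have "w = u - {j}" using w by (auto simp: symdiff_def)
    then show thesis using that(1) u j True by blast
  next
    case False
    then have "w = insert j u" using w by (auto simp: symdiff_def)
    then show thesis using that(2) u j False by blast
  qed
qed

text \<open>Singletons and ladder pairs {k, k+1} are ranked by their position on the ladder, below
  all other sets; among 3- and 4-sets those containing 1 come below those avoiding 1.\<close>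
definition ladder_potential :: "nat \<Rightarrow> nat set \<Rightarrow> nat" where
  "ladder_potential n u =
     (if card u = 0 then 0
      else if card u = 1 then 2 * (n - Min u) + 2
      else if card u = 2 then (if Max u = Suc (Min u) then 2 * (n - Min u) + 1 else 2 * n + 1)
      else 2 * n + 1 + card u - (if 1 \<in> u \<and> card u \<le> 4 then 2 else 0))"

lemma ladder_potential_singleton: "ladder_potential n {k} = 2 * (n - k) + 2"
  by (simp add: ladder_potential_def)

lemma ladder_potential_pair:
  "j < k \<Longrightarrow> ladder_potential n {j, k} = (if k = Suc j then 2 * (n - j) + 1 else 2 * n + 1)"
  by (simp add: ladder_potential_def)

lemma ladder_potential_card_2: "card u = 2 \<Longrightarrow> ladder_potential n u \<le> 2 * n + 1"
  by (simp add: ladder_potential_def)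

lemma ladder_potential_card_ge_3:
  "3 \<le> card u \<Longrightarrow>
    ladder_potential n u = 2 * n + 1 + card u - (if 1 \<in> u \<and> card u \<le> 4 then 2 else 0)"
  by (simp add: ladder_potential_def)

lemma ladder_potential_insert:
  assumes "is_vertex n u" "j \<in> {1..n}" "j \<notin> u" "ladder_flip u j"
  shows "ladder_potential n (insert j u) < ladder_potential n u"
proof (cases "2 \<le> j")
  case True
  then have "u = {j - 1}" using assms(3,4) by (auto simp: ladder_flip_ge2)
  then have "insert j u = {j - 1, j}" by auto
  then show ?thesis
    using \<open>u = {j - 1}\<close> True assms(2) by (simp add: ladder_potential_singleton ladder_potential_pair)
next
  case False
  then have "j = 1" using assms(2) by simp
  moreover have "u - {1} = u" using assms(3) \<open>j = 1\<close> by blast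
  ultimately have "card u = 3" using assms(4) by (metis ladder_flip_1)
  moreover have "card (insert j u) = 4"
    using calculation assms(3) is_vertex_finite[OF assms(1)] by simp
  ultimately show ?thesis
    using assms(3) \<open>j = 1\<close> by (simp add: ladder_potential_card_ge_3)
qed

lemma ladder_potential_remove:
  assumes u: "is_vertex n u" and j: "j \<in> u" and noflip: "\<not> ladder_flip u j"
  shows "ladder_potential n (u - {j}) < ladder_potential n u"
proof -
  have card_u: "card u = Suc (card (u - {j}))"
    using is_vertex_finite[OF u] j by (rule card_Suc_Diff1[symmetric])
  consider "card u = 1" | "card u = 2" | "card u = 3" | "4 \<le> card u" using card_u by linarith
  then show ?thesis
  proof cases
    case 1
    then have "u - {j} = {}" using card_u is_vertex_finite[OF u] by simp
    then have "u = {j}" using j by blast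
    then show ?thesis by (simp add: ladder_potential_singleton ladder_potential_def)
  next
    case 2
    then have "card (u - {j}) = 1" using card_u by simp
    then obtain k where k: "u - {j} = {k}" by (rule card_1_singletonE)
    then have uk: "u = {j, k}" "k \<noteq> j" using j by auto
    have kj: "1 \<le> k" "k \<le> n" "1 \<le> j" "j \<le> n" using u uk by (auto simp: is_vertex_def)
    have "j \<noteq> Suc k"
    proof
      assume "j = Suc k"
      then have "ladder_flip u j" using k kj by (simp add: ladder_flip_ge2)
      with noflip show False ..
    qed
    show ?thesis
    proof (cases "j < k")
      case True
      then show ?thesis
        using uk k kj by (cases "k = Suc j") (simp_all add: ladder_potential_singleton ladder_potential_pair)
    next
      case False
      then have "k < j" "{j, k} = {k, j}" using uk by auto
      then show ?thesis using uk k kj \<open>j \<noteq> Suc k\<close>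
        by (simp add: ladder_potential_singleton ladder_potential_pair)
    qed
  next
    case 3
    then show ?thesis
      using card_u ladder_potential_card_2[of "u - {j}" n] by (simp add: ladder_potential_card_ge_3)
  next
    case 4
    have "j \<noteq> 1" if "card u \<le> 4"
    proof
      assume "j = 1"
      then have "card (u - {1}) = 3" using that 4 card_u by simp
      then show False using noflip \<open>j = 1\<close> ladder_flip_1 by blast
    qed
    then have "1 \<in> u - {j}" if "1 \<in> u" "card u \<le> 4" using that by blast
    moreover have "3 \<le> card (u - {j})" using 4 card_u by simp
    ultimately show ?thesis using 4 card_u by (simp add: ladder_potential_card_ge_3) arith
  qed
qed

lemma ladder_potential_edge: "ladder_edge n u w \<Longrightarrow> ladder_potential n w < ladder_potential n u"
  by (erule ladder_edgeE) (simp_all add: ladder_potential_insert ladder_potential_remove)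

lemma is_AUSO_ladder: "is_AUSO n (ladder_outmap n)"
  unfolding is_AUSO_def
proof (intro conjI allI notI is_USO_ladder)
  fix v assume "(ladder_edge n)\<^sup>+\<^sup>+ v v"
  then have "ladder_potential n v < ladder_potential n v"
    using ladder_potential_edge by (rule tranclp_potential_less)
  then show False by simp
qed

lemma ladder_path_remove:
  assumes "is_vertex n u" "w \<subseteq> u" "2 \<le> card w" "1 \<in> w \<or> 1 \<notin> u"
  shows "(ladder_edge n)\<^sup>*\<^sup>* u w"
  using assms
proof (induction "card (u - w)" arbitrary: u rule: less_induct)
  case less
  show ?case
  proof (cases "u = w")
    case False
    then obtain j where j: "j \<in> u" "j \<notin> w" using less.prems(2) by blast
    have fin: "finite u" using less.prems(1) by (rule is_vertex_finite)
    have "j \<noteq> 1" using j less.prems(4) by blast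
    then have "2 \<le> j" using j less.prems(1) by (auto simp: is_vertex_def)
    moreover have "card w < card u"
      using fin less.prems(2) False by (simp add: psubset_card_mono psubset_eq)
    ultimately have noflip: "\<not> ladder_flip u j" using less.prems(3) ladder_flip_card_le by fastforce
    have edge: "ladder_edge n u (u - {j})"
      using less.prems(1) j(1) noflip by (rule ladder_edge_remove)
    have "u - {j} - w = (u - w) - {j}" by blast
    then have "card (u - {j} - w) < card (u - w)"
      using fin j by (simp only:) (intro card_Diff1_less; simp)
    moreover have "is_vertex n (u - {j})" using less.prems(1) by (auto simp: is_vertex_def)
    ultimately have "(ladder_edge n)\<^sup>*\<^sup>* (u - {j}) w"
      using less.hyps less.prems(2-4) j by blast
    with edge show ?thesis by (rule converse_rtranclp_into_rtranclp)
  qed simp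
qed

lemma ladder_rung:
  assumes "1 \<le> i" "i < n"
  shows "(ladder_edge n)\<^sup>*\<^sup>* {i} {Suc i}"
proof -
  have up: "ladder_edge n {i} (insert (Suc i) {i})"
    using assms by (intro ladder_edge_insert) (auto simp: is_vertex_def ladder_flip_ge2)
  have diff: "{Suc i, i} - {i} = {Suc i}" by auto
  then have "\<not> ladder_flip {Suc i, i} i"
    using assms(1) by (simp add: ladder_flip_def) arith
  then have "ladder_edge n {Suc i, i} ({Suc i, i} - {i})"
    using assms by (intro ladder_edge_remove) (auto simp: is_vertex_def)
  with diff have down: "ladder_edge n {Suc i, i} {Suc i}" by simp
  from up down show ?thesis by (simp add: converse_rtranclp_into_rtranclp)
qed

lemma ladder_climb:
  assumes "1 \<le> k" "k \<le> n"
  shows "(ladder_edge n)\<^sup>*\<^sup>* {1} {k}"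
  using assms
proof (induction k rule: nat_induct_at_least)
  case (Suc k)
  then have "(ladder_edge n)\<^sup>*\<^sup>* {1} {k}" "(ladder_edge n)\<^sup>*\<^sup>* {k} {Suc k}"
    by (simp_all add: ladder_rung)
  then show ?case by (rule rtranclp_trans)
qed simp

lemma ladder_path_to_bottom:
  assumes "is_vertex n u" "3 \<le> card u"
  shows "(ladder_edge n)\<^sup>*\<^sup>* u {1}"
proof -
  have from_1: "(ladder_edge n)\<^sup>*\<^sup>* v {1}" if v: "is_vertex n v" "3 \<le> card v" "1 \<in> v" for v
  proof -
    have "\<not> v \<subseteq> {1, 2}"
      using v(2) card_mono[of "{1, 2}" v] by (auto simp: card_insert_if)
    then obtain k where k: "k \<in> v" "k \<noteq> 1" "k \<noteq> 2" by blast
    have "(ladder_edge n)\<^sup>*\<^sup>* v {1, k}"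
      using v k by (intro ladder_path_remove) auto
    moreover have "ladder_edge n {1, k} {1}"
    proof -
      have diff: "{1, k} - {k} = {1}" using k by auto
      have "2 \<le> k" using v(1) k by (auto simp: is_vertex_def)
      then have "\<not> ladder_flip {1, k} k" using diff k(3) by (simp add: ladder_flip_ge2)
      then have "ladder_edge n {1, k} ({1, k} - {k})"
        using v k by (intro ladder_edge_remove) (auto simp: is_vertex_def)
      with diff show ?thesis by simp
    qed
    ultimately show ?thesis by (rule rtranclp.rtrancl_into_rtrancl)
  qed
  show ?thesis
  proof (cases "1 \<in> u")
    case False
    obtain T where T: "T \<subseteq> u" "card T = 3"
      using assms(2) by (meson obtain_subset_with_card_n)
    have "u \<noteq> {}" using assms(2) by auto
    then have "1 \<le> n" using assms(1) by (auto simp: is_vertex_def)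
    have T_vertex: "is_vertex n T" using assms(1) T(1) by (auto simp: is_vertex_def)
    have "1 \<notin> T" using T(1) False by blast
    then have "ladder_flip T 1"
      using T(2) ladder_flip_1[of T] by simp
    then have up: "ladder_edge n T (insert 1 T)"
      using T_vertex \<open>1 \<le> n\<close> \<open>1 \<notin> T\<close> by (intro ladder_edge_insert) auto
    have "card T \<le> card (insert 1 T)" by (rule card_insert_le)
    then have "(ladder_edge n)\<^sup>*\<^sup>* (insert 1 T) {1}"
      using T_vertex \<open>1 \<le> n\<close> T(2) by (intro from_1) (auto simp: is_vertex_def)
    moreover have "(ladder_edge n)\<^sup>*\<^sup>* u T"
      using assms(1) T False by (intro ladder_path_remove) auto
    ultimately show ?thesis using up by (meson converse_rtranclp_into_rtranclp rtranclp_trans)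
  qed (use assms from_1 in blast)
qed

lemma ladder_reachmap:
  assumes "is_vertex n u" "3 \<le> card u"
  shows "reachmap n (ladder_outmap n) u = {1..n}"
proof
  show "reachmap n (ladder_outmap n) u \<subseteq> {1..n}" by (rule reachmap_flip_outmap_subset)
  show "{1..n} \<subseteq> reachmap n (ladder_outmap n) u"
  proof
    fix j assume j: "j \<in> {1..n}"
    have "\<exists>x. (ladder_edge n)\<^sup>*\<^sup>* {1} x \<and> j \<in> ladder_outmap n x"
    proof (cases "j = 1")
      case True
      then show ?thesis using j by (auto simp: flip_outmap_def ladder_flip_def)
    next
      case False
      then have "(ladder_edge n)\<^sup>*\<^sup>* {1} {j - 1}" using j by (intro ladder_climb) auto
      moreover have "j \<in> ladder_outmap n {j - 1}"
        using j False by (auto simp: flip_outmap_def ladder_flip_def)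
      ultimately show ?thesis by blast
    qed
    then show "j \<in> reachmap n (ladder_outmap n) u"
      using ladder_path_to_bottom[OF assms] by (auto simp: reachmap_def intro: rtranclp_trans)
  qed
qed

lemma ladder_not_nice:
  assumes "i + 3 \<le> n"
  shows "\<not> i_nice n (ladder_outmap n) i"
proof
  assume nice: "i_nice n (ladder_outmap n) i"
  let ?v = "{1..n}"
  have v: "is_vertex n ?v" by (simp add: is_vertex_def)
  have "1 \<in> ?v - {n}" "1 \<noteq> n - 1" using assms by auto
  then have "?v - {n} \<noteq> {n - 1}" by blast
  then have "n \<in> ladder_outmap n ?v" using assms by (simp add: flip_outmap_def ladder_flip_ge2)
  then have "\<not> global_sink n (ladder_outmap n) ?v" by (auto simp: global_sink_def)
  then obtain u where u: "is_vertex n u" "dist_le n (ladder_outmap n) ?v u i"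
    and smaller: "reachmap n (ladder_outmap n) u \<subset> reachmap n (ladder_outmap n) ?v"
    using nice v unfolding i_nice_def i_covered_by_def by blast
  obtain k where k: "k \<le> i" "(ladder_edge n ^^ k) ?v u" using u(2) by (auto simp: dist_le_def)
  have "card ?v \<le> card u + k" using k(2) by (rule relpow_dedge_card_le)
  then have "3 \<le> card u" using k(1) assms by simp
  then have "reachmap n (ladder_outmap n) u = {1..n}" using u(1) by (intro ladder_reachmap)
  then show False using smaller reachmap_flip_outmap_subset by blast
qed

theorem theorem16:
  fixes n :: nat
  assumes "n \<ge> 1"
  shows "\<exists>s. is_AUSO n s \<and> (\<forall>i::nat. int i < int n - 2 \<longrightarrow> \<not> i_nice n s i)"
proof (intro exI conjI allI impI)
  show "is_AUSO n (ladder_outmap n)" by (rule is_AUSO_ladder)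
  fix i :: nat assume "int i < int n - 2"
  then show "\<not> i_nice n (ladder_outmap n) i" by (intro ladder_not_nice) simp
qed

end
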